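(* Let $m \ge 1$ and $n \ge 2m+1$ be integers. Then for every real $r$ with $|r|<1$, $$\int_{-1}^1 \frac{T_n(s)(1-s^2)^{m-\frac{1}{2}}}{(s-r)^2}\,ds = \pi(-1)^{m+1}\left(\frac{1}{2}\right)^{2m-1}\sum_{j=0}^{2m-1}(-1)^j\binom{2m-1}{j}(n+1-2m+2j)\,U_{n-2m+2j}(r),$$ where the integral is a Hadamard finite-part integral.
   Context: $T_k(s)=\cos(k\cos^{-1}s)$ and $U_k(s)=\frac{\sin((k+1)\cos^{-1}s)}{\sin(\cos^{-1}s)}$ are the Tchebyshev polynomials of the first and second kinds. For a positive integer $\alpha\ge 2$ and $|r|<1$, the integral $\int_{-1}^1 \frac{D(s)}{(s-r)^\alpha}ds$ is understood in the Hadamard finite-part sense; in particular it satisfies $\int_{-1}^1 \frac{D(s)}{(s-r)^{\alpha}}ds=\frac{1}{\alpha-1}\frac{d}{dr}\int_{-1}^1\frac{D(s)}{(s-r)^{\alpha-1}}ds$, where for $\alpha-1=1$ the right-hand integral is a Cauchy principal value. $\binom{a}{j}=\frac{a!}{j!(a-j)!}$. *)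

theory Defs
  imports "HOL-Analysis.Analysis"
begin

definition chebT :: "nat \<Rightarrow> real \<Rightarrow> real" where
  "chebT k s = cos (real k * arccos s)"

definition chebU :: "nat \<Rightarrow> real \<Rightarrow> real" where
  "chebU k s = sin (real (k + 1) * arccos s) / sin (arccos s)"

definition has_cpv_integral :: "(real \<Rightarrow> real) \<Rightarrow> real \<Rightarrow> real \<Rightarrow> bool" where
  "has_cpv_integral D r I \<longleftrightarrow>
     ((\<lambda>\<epsilon>. integral {-1..r-\<epsilon>} (\<lambda>s. D s / (s - r))
          + integral {r+\<epsilon>..1} (\<lambda>s. D s / (s - r))) \<longlongrightarrow> I) (at_right 0)"

text \<open>Hadamard finite-part integral of D(s)/(s-r)^2 over [-1,1] (|r|<1):
  the derivative in r of the principal-value integral of D(s)/(s-r).\<close>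
definition has_hadamard2_integral :: "(real \<Rightarrow> real) \<Rightarrow> real \<Rightarrow> real \<Rightarrow> bool" where
  "has_hadamard2_integral D r J \<longleftrightarrow>
     (\<exists>P. (\<forall>t\<in>{-1<..<1}. has_cpv_integral D t (P t)) \<and> (P has_real_derivative J) (at r))"

end

theory Submission
  imports Defs
begin

(* Substituting s = cos theta turns the weight (1 - s^2)^(m - 1/2) into sin(theta)^(2m - 1), and the
   binomial theorem applied to sin(theta) = (e^(i theta) - e^(-i theta)) / 2i writes
   T_n(s) (1 - s^2)^(m - 1/2) as a combination of the functions sin(k theta) with
   k = n - 2m + 1 + 2j >= 1.  For each of them the principal value of the integral of
   sin(k arccos s) / (s - r) is -pi T_k(r): for k = 1 this follows from an explicit antiderivative
   with a logarithmic singularity at r, and for larger k by induction along the three-term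
   recurrence, in which the factor 2s = 2(s - r) + 2r splits off an ordinary integral.
   The finite-part integral is the r-derivative of the principal value, and T_k' = k U_(k-1). *)

section \<open>Principal values\<close>

definition cpv_truncated :: "(real \<Rightarrow> real) \<Rightarrow> real \<Rightarrow> real \<Rightarrow> real" where
  "cpv_truncated D t e = integral {-1..t-e} (\<lambda>s. D s / (s - t)) + integral {t+e..1} (\<lambda>s. D s / (s - t))"

lemma has_cpv_integral_iff_truncated:
  "has_cpv_integral D t I \<longleftrightarrow> (cpv_truncated D t \<longlongrightarrow> I) (at_right 0)"
  unfolding has_cpv_integral_def cpv_truncated_def ..

lemma has_cpv_integral_eventually:
  assumes "\<delta> > 0" "\<And>e. 0 < e \<Longrightarrow> e < \<delta> \<Longrightarrow> cpv_truncated D t e = G e"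
    and "(G \<longlongrightarrow> I) (at_right 0)"
  shows "has_cpv_integral D t I"
  unfolding has_cpv_integral_iff_truncated
proof (rule Lim_transform_eventually[OF assms(3)])
  show "\<forall>\<^sub>F e in at_right 0. G e = cpv_truncated D t e"
    using assms(1,2) by (auto simp: eventually_at_right_field intro!: exI[of _ \<delta>])
qed

lemma has_cpv_integral_cong:
  assumes "\<And>s. s \<in> {-1..1} \<Longrightarrow> f s = g s" "\<bar>t\<bar> < 1" "has_cpv_integral f t I"
  shows "has_cpv_integral g t I"
proof (rule has_cpv_integral_eventually[where \<delta> = 1])
  show "cpv_truncated g t e = cpv_truncated f t e" if "0 < e" for e
    unfolding cpv_truncated_def using assms(1,2) that
    by (intro arg_cong2[where f = "(+)"] integral_cong) auto
qed (use assms(3) in \<open>auto simp: has_cpv_integral_iff_truncated\<close>)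

lemma has_cpv_integral_cmult:
  assumes "has_cpv_integral f t I"
  shows "has_cpv_integral (\<lambda>s. c * f s) t (c * I)"
proof -
  have "cpv_truncated (\<lambda>s. c * f s) t = (\<lambda>e. c * cpv_truncated f t e)"
    by (rule ext) (simp only: cpv_truncated_def times_divide_eq_right[symmetric] integral_mult_right distrib_left)
  then show ?thesis
    using tendsto_mult_left assms unfolding has_cpv_integral_iff_truncated by metis
qed

lemma integrable_on_cpv_integrand:
  fixes f :: "real \<Rightarrow> real"
  assumes "continuous_on {-1..1} f" "{a..b} \<subseteq> {-1..1}" "t \<notin> {a..b}"
  shows "(\<lambda>s. f s / (s - t)) integrable_on {a..b}"
proof -
  have "continuous_on {a..b} f"
    using continuous_on_subset assms(1,2) .
  then have "continuous_on {a..b} (\<lambda>s. f s / (s - t))"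
    using assms(3) by (auto intro!: continuous_intros)
  then show ?thesis
    by (rule integrable_continuous_interval)
qed

lemma has_cpv_integral_add:
  assumes "continuous_on {-1..1} f" "continuous_on {-1..1} g" "\<bar>t\<bar> < 1"
    and "has_cpv_integral f t I" "has_cpv_integral g t J"
  shows "has_cpv_integral (\<lambda>s. f s + g s) t (I + J)"
proof (rule has_cpv_integral_eventually[where \<delta> = 1])
  have split: "integral {a..b} (\<lambda>s. (f s + g s) / (s - t))
      = integral {a..b} (\<lambda>s. f s / (s - t)) + integral {a..b} (\<lambda>s. g s / (s - t))"
    if "{a..b} \<subseteq> {-1..1}" "t \<notin> {a..b}" for a b
    unfolding add_divide_distrib using that
    by (intro integral_add integrable_on_cpv_integrand assms(1,2))
  show "cpv_truncated (\<lambda>s. f s + g s) t e = cpv_truncated f t e + cpv_truncated g t e"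
    if "0 < e" for e
    using that assms(3) split[of "-1" "t - e"] split[of "t + e" 1] by (simp add: cpv_truncated_def abs_less_iff)
  show "((\<lambda>e. cpv_truncated f t e + cpv_truncated g t e) \<longlongrightarrow> I + J) (at_right 0)"
    using assms(4,5) by (intro tendsto_add) (simp_all add: has_cpv_integral_iff_truncated)
qed simp

lemma has_cpv_integral_sum:
  assumes "finite A" "\<bar>t\<bar> < 1"
    and "\<And>i. i \<in> A \<Longrightarrow> continuous_on {-1..1} (f i)"
    and "\<And>i. i \<in> A \<Longrightarrow> has_cpv_integral (f i) t (I i)"
  shows "has_cpv_integral (\<lambda>s. \<Sum>i\<in>A. f i s) t (\<Sum>i\<in>A. I i)"
  using assms(1,3,4)
proof (induction A rule: finite_induct)
  case empty
  then show ?case by (simp add: has_cpv_integral_def)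
next
  case (insert i A)
  then show ?case
    unfolding sum.insert[OF insert.hyps]
    by (intro has_cpv_integral_add continuous_on_sum assms(2)) auto
qed

(* The logarithmic term takes the same value u ln e at t - e and t + e, so it drops out of the
   truncated integral and only the continuous part C contributes to the limit. *)
lemma has_cpv_integral_log_antiderivative:
  fixes C D :: "real \<Rightarrow> real"
  assumes t: "\<bar>t\<bar> < 1" and C: "continuous_on {-1..1} C"
    and F': "\<And>x. -1 < x \<Longrightarrow> x < 1 \<Longrightarrow> x \<noteq> t \<Longrightarrow>
      ((\<lambda>s. C s + u * ln \<bar>s - t\<bar>) has_real_derivative D x / (x - t)) (at x)"
  shows "has_cpv_integral D t (C 1 - C (-1) + u * (ln (1 - t) - ln (1 + t)))"
proof (rule has_cpv_integral_eventually[where \<delta> = "1 - \<bar>t\<bar>"])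
  define F where "F s = C s + u * ln \<bar>s - t\<bar>" for s
  have FTC: "((\<lambda>s. D s / (s - t)) has_integral F b - F a) {a..b}"
    if "-1 \<le> a" "a \<le> b" "b \<le> 1" "t \<notin> {a..b}" for a b
  proof (rule fundamental_theorem_of_calculus_interior)
    show "continuous_on {a..b} F"
      unfolding F_def using that
      by (intro continuous_intros continuous_on_subset[OF C]) auto
    show "(F has_vector_derivative D x / (x - t)) (at x)" if "x \<in> {a<..<b}" for x
      unfolding F_def has_real_derivative_iff_has_vector_derivative[symmetric]
      using that \<open>-1 \<le> a\<close> \<open>b \<le> 1\<close> \<open>t \<notin> {a..b}\<close> by (intro F') auto
  qed fact
  show "cpv_truncated D t e = C (t - e) - C (t + e) + (C 1 - C (-1) + u * (ln (1 - t) - ln (1 + t)))"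
    if "0 < e" "e < 1 - \<bar>t\<bar>" for e
  proof -
    have "cpv_truncated D t e = (F (t - e) - F (-1)) + (F 1 - F (t + e))"
      unfolding cpv_truncated_def using that by (intro arg_cong2[where f = "(+)"] integral_unique FTC) auto
    moreover have "\<bar>t - e - t\<bar> = e" "\<bar>t + e - t\<bar> = e" "\<bar>1 - t\<bar> = 1 - t" "\<bar>-1 - t\<bar> = 1 + t"
      using that t by auto
    ultimately show ?thesis
      by (simp add: F_def algebra_simps)
  qed
  have "isCont C t"
    using t by (intro continuous_on_interior[OF C]) auto
  moreover have "((\<lambda>e. t - e) \<longlongrightarrow> t) (at_right 0)" "((\<lambda>e. t + e) \<longlongrightarrow> t) (at_right 0)"
    by (auto intro!: tendsto_eq_intros)
  ultimately have lim: "((\<lambda>e. C (t - e) - C (t + e)) \<longlongrightarrow> C t - C t) (at_right 0)"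
    by (intro tendsto_diff isCont_tendsto_compose[of t C])
  show "((\<lambda>e. C (t - e) - C (t + e) + (C 1 - C (-1) + u * (ln (1 - t) - ln (1 + t))))
      \<longlongrightarrow> C 1 - C (-1) + u * (ln (1 - t) - ln (1 + t))) (at_right 0)"
    using tendsto_add[OF lim tendsto_const] by simp
qed (use t in simp)

lemma has_cpv_integral_regular:
  assumes "continuous_on {-1..1} g" "\<bar>t\<bar> < 1"
  shows "has_cpv_integral (\<lambda>s. (s - t) * g s) t (integral {-1..1} g)"
proof -
  have "((\<lambda>s. integral {-1..s} g + 0 * ln \<bar>s - t\<bar>) has_real_derivative (x - t) * g x / (x - t)) (at x)"
    if "-1 < x" "x < 1" "x \<noteq> t" for x
  proof -
    have "((\<lambda>s. integral {-1..s} g) has_real_derivative g x) (at x within {-1..1})"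
      using that by (intro integral_has_real_derivative assms(1)) auto
    moreover have "at x within {-1..1} = at x"
      using that by (intro at_within_interior) auto
    ultimately show ?thesis
      using that by simp
  qed
  from has_cpv_integral_log_antiderivative[OF assms(2) _ this] show ?thesis
    by (simp add: indefinite_integral_continuous_1 integrable_continuous_interval assms(1))
qed

section \<open>The integrands sin (k arccos s)\<close>

lemma has_real_derivative_arccos_sin:
  assumes "-1 < x" "x < 1"
  shows "(arccos has_real_derivative -1 / sin (arccos x)) (at x)"
  using DERIV_arccos[OF assms] sin_arccos[of x] assms by (simp add: divide_inverse)

lemma has_real_derivative_sin_mult_arccos:
  assumes "-1 < x" "x < 1"
  shows "((\<lambda>s. sin (a * arccos s)) has_real_derivative - a * cos (a * arccos x) / sin (arccos x)) (at x)"
  by (rule derivative_eq_intros has_real_derivative_arccos_sin[OF assms] refl)+ simp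

lemma has_real_derivative_cos_mult_arccos:
  assumes "-1 < x" "x < 1"
  shows "((\<lambda>s. cos (a * arccos s)) has_real_derivative a * sin (a * arccos x) / sin (arccos x)) (at x)"
  by (rule derivative_eq_intros has_real_derivative_arccos_sin[OF assms] refl)+ simp

lemma has_real_derivative_chebT:
  assumes "k \<ge> 1" "\<bar>t\<bar> < 1"
  shows "(chebT k has_real_derivative real k * chebU (k - 1) t) (at t)"
proof -
  have "chebT k = (\<lambda>s. cos (real k * arccos s))"
    by (simp add: chebT_def fun_eq_iff)
  then show ?thesis
    using has_real_derivative_cos_mult_arccos[of t "real k"] assms
    by (simp add: chebU_def abs_less_iff)
qed

lemma has_integral_sin_arccos:
  "((\<lambda>s. sin (arccos s)) has_integral pi / 2) {-1..1}"
proof -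
  let ?F = "\<lambda>s. (sin (2 * arccos s) / 2 - arccos s) / 2"
  have "((\<lambda>s. sin (arccos s)) has_integral ?F 1 - ?F (-1)) {-1..1}"
  proof (rule fundamental_theorem_of_calculus_interior)
    show "continuous_on {-1..1} ?F"
      by (intro continuous_intros) auto
    show "(?F has_vector_derivative sin (arccos x)) (at x)" if "x \<in> {-1<..<1}" for x
    proof -
      have x: "-1 < x" "x < 1"
        using that by auto
      have "(?F has_real_derivative ((- 2 * cos (2 * arccos x) / sin (arccos x)) / 2 - (-1 / sin (arccos x))) / 2) (at x)"
        by (intro DERIV_cdivide DERIV_diff has_real_derivative_sin_mult_arccos has_real_derivative_arccos_sin x)
      moreover have "((- 2 * cos (2 * arccos x) / sin (arccos x)) / 2 - (-1 / sin (arccos x))) / 2 = sin (arccos x)"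
        using sin_arccos_nonzero[OF x] cos_double_sin[of "arccos x"] by (simp add: field_simps power2_eq_square)
      ultimately show ?thesis
        by (simp add: has_real_derivative_iff_has_vector_derivative)
    qed
  qed simp
  then show ?thesis
    by simp
qed

lemma has_integral_sin_mult_arccos:
  assumes "k \<ge> 2"
  shows "((\<lambda>s. sin (real k * arccos s)) has_integral 0) {-1..1}"
proof -
  define a where "a = real k"
  have a: "a + 1 \<noteq> 0" "a - 1 \<noteq> 0"
    using assms by (auto simp: a_def)
  let ?F = "\<lambda>s. (sin ((a + 1) * arccos s) / (a + 1) - sin ((a - 1) * arccos s) / (a - 1)) / 2"
  have "((\<lambda>s. sin (a * arccos s)) has_integral ?F 1 - ?F (-1)) {-1..1}"
  proof (rule fundamental_theorem_of_calculus_interior)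
    show "continuous_on {-1..1} ?F"
      using a by (intro continuous_intros) auto
    show "(?F has_vector_derivative sin (a * arccos x)) (at x)" if "x \<in> {-1<..<1}" for x
    proof -
      have x: "-1 < x" "x < 1"
        using that by auto
      define \<theta> where "\<theta> = arccos x"
      have sin_nonzero: "sin \<theta> \<noteq> 0"
        unfolding \<theta>_def using sin_arccos_nonzero[OF x] .
      have cancel: "(- b * c / sin \<theta>) / b = - c / sin \<theta>" if "b \<noteq> 0" for b c
        using that by simp
      have "(?F has_real_derivative ((- (a + 1) * cos ((a + 1) * \<theta>) / sin \<theta>) / (a + 1)
          - (- (a - 1) * cos ((a - 1) * \<theta>) / sin \<theta>) / (a - 1)) / 2) (at x)"
        unfolding \<theta>_def by (intro DERIV_cdivide DERIV_diff has_real_derivative_sin_mult_arccos x)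
      also have "((- (a + 1) * cos ((a + 1) * \<theta>) / sin \<theta>) / (a + 1)
          - (- (a - 1) * cos ((a - 1) * \<theta>) / sin \<theta>) / (a - 1)) / 2
          = (cos ((a - 1) * \<theta>) - cos ((a + 1) * \<theta>)) / (2 * sin \<theta>)"
        unfolding cancel[OF a(1)] cancel[OF a(2)] using sin_nonzero by (simp add: field_simps)
      also have "cos ((a - 1) * \<theta>) - cos ((a + 1) * \<theta>) = 2 * sin (a * \<theta>) * sin \<theta>"
        by (simp add: algebra_simps cos_add cos_diff)
      finally show ?thesis
        using sin_nonzero by (simp add: has_real_derivative_iff_has_vector_derivative \<theta>_def)
    qed
  qed simp
  moreover have "sin ((a + 1) * pi) = 0" "sin ((a - 1) * pi) = 0"
    using sin_npi[of "k + 1"] sin_npi[of "k - 1"] assms by (simp_all add: a_def of_nat_diff add.commute)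
  ultimately show ?thesis
    by (simp add: a_def)
qed

lemma has_real_derivative_ln_abs_diff:
  fixes t x :: real
  assumes "x \<noteq> t"
  shows "((\<lambda>s. ln \<bar>s - t\<bar>) has_real_derivative 1 / (x - t)) (at x)"
proof -
  have "ln \<bar>y\<bar> = ln (y^2) / 2" for y :: real
    using ln_realpow[of "\<bar>y\<bar>" 2] by (cases "y = 0") auto
  then have eq: "(\<lambda>s. ln \<bar>s - t\<bar>) = (\<lambda>s. ln ((s - t)^2) / 2)"
    by blast
  have "0 < (x - t)^2"
    using assms by simp
  then show ?thesis
    unfolding eq using assms by (auto intro!: derivative_eq_intros simp: field_simps power2_eq_square)
qed

lemma has_real_derivative_sqrt_one_minus_square:
  fixes x :: real
  assumes "-1 < x" "x < 1"
  shows "((\<lambda>s. sqrt (1 - s^2)) has_real_derivative - x / sqrt (1 - x^2)) (at x)"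
proof -
  have "0 < 1 - x^2"
    using assms by (simp add: abs_square_less_1 abs_less_iff)
  then show ?thesis
    by (auto intro!: derivative_eq_intros simp: field_simps)
qed

lemma chebyshev_kernel_pos:
  fixes s t :: real
  assumes "\<bar>t\<bar> < 1" "\<bar>s\<bar> \<le> 1"
  shows "1 - t * s + sqrt (1 - t^2) * sqrt (1 - s^2) > 0"
proof -
  have "\<bar>t\<bar> * \<bar>s\<bar> \<le> \<bar>t\<bar>"
    using assms(2) by (simp add: mult_left_le)
  then have "\<bar>t * s\<bar> < 1"
    using assms(1) by (simp add: abs_mult)
  moreover have "sqrt (1 - t^2) * sqrt (1 - s^2) \<ge> 0"
    using assms by (simp add: abs_square_le_1 abs_square_less_1 less_imp_le)
  ultimately show ?thesis
    by linarith
qed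

lemma has_real_derivative_ln_chebyshev_kernel:
  fixes t x :: real
  assumes t: "\<bar>t\<bar> < 1" and x: "-1 < x" "x < 1" "x \<noteq> t"
  shows "((\<lambda>s. ln \<bar>s - t\<bar> - ln (1 - t * s + sqrt (1 - t^2) * sqrt (1 - s^2)))
    has_real_derivative sqrt (1 - t^2) / ((x - t) * sqrt (1 - x^2))) (at x)"
proof -
  define u w where "u = sqrt (1 - t^2)" and "w = sqrt (1 - x^2)"
  define K where "K = 1 - t * x + u * w"
  have "t^2 < 1" "x^2 < 1"
    using t x by (simp_all add: abs_square_less_1 abs_less_iff)
  then have u2: "u^2 = 1 - t^2" and w2: "w^2 = 1 - x^2" and w: "w > 0"
    by (simp_all add: u_def w_def)
  have K: "K > 0"
    using chebyshev_kernel_pos[OF t, of x] x by (simp add: K_def u_def w_def)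
  have "((\<lambda>s. sqrt (1 - s^2)) has_real_derivative - x / w) (at x)"
    unfolding w_def using x(1,2) by (rule has_real_derivative_sqrt_one_minus_square)
  then have "((\<lambda>s. 1 - t * s + u * sqrt (1 - s^2)) has_real_derivative 0 - t * 1 + u * (- x / w)) (at x)"
    by (intro DERIV_add DERIV_diff DERIV_cmult DERIV_const DERIV_ident)
  then have "((\<lambda>s. ln (1 - t * s + u * sqrt (1 - s^2))) has_real_derivative (0 - t * 1 + u * (- x / w)) / K) (at x)"
    using DERIV_chain2[OF DERIV_ln_divide] K by (simp add: K_def w_def)
  then have "((\<lambda>s. ln \<bar>s - t\<bar> - ln (1 - t * s + u * sqrt (1 - s^2)))
      has_real_derivative 1 / (x - t) - (0 - t * 1 + u * (- x / w)) / K) (at x)"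
    by (intro DERIV_diff has_real_derivative_ln_abs_diff x)
  also have "1 / (x - t) - (0 - t * 1 + u * (- x / w)) / K = (w * K + (t * w + u * x) * (x - t)) / ((x - t) * w * K)"
    using w K x by (simp add: field_simps)
  also have "w * K + (t * w + u * x) * (x - t) = u * K"
    unfolding K_def using u2 w2 by algebra
  finally show ?thesis
    using K by (simp add: u_def w_def)
qed

lemma has_cpv_integral_sqrt_one_minus_square:
  fixes t :: real
  assumes t: "\<bar>t\<bar> < 1"
  shows "has_cpv_integral (\<lambda>s. sqrt (1 - s^2)) t (- pi * t)"
proof -
  define u where "u = sqrt (1 - t^2)"
  define K where "K s = 1 - t * s + u * sqrt (1 - s^2)" for s
  \<comment> \<open>From \<open>sqrt (1 - s^2) / (s - t) = - (s + t) / sqrt (1 - s^2) + u^2 / ((s - t) sqrt (1 - s^2))\<close>.\<close>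
  define C where "C s = sqrt (1 - s^2) + t * arccos s - u * ln (K s)" for s
  have K_pos: "K s > 0" if "s \<in> {-1..1}" for s
    using chebyshev_kernel_pos[OF t, of s] that by (simp add: K_def u_def abs_le_iff)
  have "has_cpv_integral (\<lambda>s. sqrt (1 - s^2)) t (C 1 - C (-1) + u * (ln (1 - t) - ln (1 + t)))"
  proof (rule has_cpv_integral_log_antiderivative[OF t])
    have "continuous_on {-1..1} K"
      unfolding K_def by (intro continuous_intros)
    then show "continuous_on {-1..1} C"
      unfolding C_def using K_pos by (intro continuous_intros) force+
    fix x :: real
    assume x: "-1 < x" "x < 1" "x \<noteq> t"
    define w where "w = sqrt (1 - x^2)"
    have "x^2 < 1" "t^2 < 1"
      using t x by (simp_all add: abs_square_less_1 abs_less_iff)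
    then have u2: "u^2 = 1 - t^2" and w2: "w^2 = 1 - x^2" and w: "w > 0"
      by (simp_all add: u_def w_def)
    have "((\<lambda>s. sqrt (1 - s^2) + t * arccos s + u * (ln \<bar>s - t\<bar> - ln (K s)))
        has_real_derivative - x / w + t * (- 1 / w) + u * (u / ((x - t) * w))) (at x)"
    proof (intro DERIV_add DERIV_cmult)
      show "((\<lambda>s. sqrt (1 - s^2)) has_real_derivative - x / w) (at x)"
        unfolding w_def using x(1,2) by (rule has_real_derivative_sqrt_one_minus_square)
      show "(arccos has_real_derivative - 1 / w) (at x)"
        using DERIV_arccos[OF x(1,2)] by (simp add: w_def divide_inverse)
      show "((\<lambda>s. ln \<bar>s - t\<bar> - ln (K s)) has_real_derivative u / ((x - t) * w)) (at x)"
        unfolding K_def u_def w_def by (rule has_real_derivative_ln_chebyshev_kernel[OF t x])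
    qed
    also have "- x / w + t * (- 1 / w) + u * (u / ((x - t) * w)) = (u^2 - (x + t) * (x - t)) / ((x - t) * w)"
      using w x(3) by (simp add: field_simps power2_eq_square)
    also have "u^2 - (x + t) * (x - t) = w^2"
      using u2 w2 by (simp add: algebra_simps power2_eq_square)
    also have "w^2 / ((x - t) * w) = w / (x - t)"
      using w by (simp add: power2_eq_square)
    finally show "((\<lambda>s. C s + u * ln \<bar>s - t\<bar>) has_real_derivative sqrt (1 - x^2) / (x - t)) (at x)"
      by (simp add: C_def w_def algebra_simps)
  qed
  moreover have "C 1 - C (-1) + u * (ln (1 - t) - ln (1 + t)) = - pi * t"
    by (simp add: C_def K_def algebra_simps)
  ultimately show ?thesis
    by simp
qed

lemma cos_mult_add_two:
  fixes c x :: real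
  shows "cos ((c + 2) * x) = 2 * cos x * cos ((c + 1) * x) - cos (c * x)"
proof -
  have "cos ((c + 2) * x) = cos ((c + 1) * x + x)" "cos (c * x) = cos ((c + 1) * x - x)"
    by (simp_all add: algebra_simps)
  then show ?thesis
    by (simp add: cos_add cos_diff)
qed

lemma sin_mult_add_two:
  fixes c x :: real
  shows "sin ((c + 2) * x) = 2 * cos x * sin ((c + 1) * x) - sin (c * x)"
proof -
  have "sin ((c + 2) * x) = sin ((c + 1) * x + x)" "sin (c * x) = sin ((c + 1) * x - x)"
    by (simp_all add: algebra_simps)
  then show ?thesis
    by (simp add: sin_add sin_diff)
qed

lemma chebT_Suc_Suc:
  assumes "\<bar>t\<bar> \<le> 1"
  shows "chebT (Suc (Suc k)) t = 2 * t * chebT (Suc k) t - chebT k t"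
  using cos_mult_add_two[of "real k" "arccos t"] assms
  by (simp add: chebT_def algebra_simps)

lemma continuous_on_sin_mult_arccos: "continuous_on {-1..1} (\<lambda>s. sin (c * arccos s))"
  by (intro continuous_intros) auto

lemma has_cpv_integral_sin_mult_arccos_recurrence:
  assumes t: "\<bar>t\<bar> < 1"
    and I0: "has_cpv_integral (\<lambda>s. sin (real k * arccos s)) t I0"
    and I1: "has_cpv_integral (\<lambda>s. sin (real (Suc k) * arccos s)) t I1"
  shows "has_cpv_integral (\<lambda>s. sin (real (Suc (Suc k)) * arccos s)) t
    (integral {-1..1} (\<lambda>s. 2 * sin (real (Suc k) * arccos s)) + 2 * t * I1 - I0)"
proof -
  let ?g = "\<lambda>s. 2 * sin (real (Suc k) * arccos s)"
  have "continuous_on {-1..1} ?g"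
    using continuous_on_sin_mult_arccos by (rule continuous_on_mult_left)
  then have split: "has_cpv_integral
      (\<lambda>s. (s - t) * ?g s + (2 * t * sin (real (Suc k) * arccos s) + (-1) * sin (real k * arccos s))) t
      (integral {-1..1} ?g + (2 * t * I1 + (-1) * I0))"
    by (intro has_cpv_integral_add has_cpv_integral_regular has_cpv_integral_cmult I0 I1 t
        continuous_on_mult_left continuous_on_sin_mult_arccos continuous_on_add continuous_on_mult
        continuous_on_diff continuous_on_id continuous_on_const)
  have recurrence: "(s - t) * ?g s + (2 * t * sin (real (Suc k) * arccos s) + (-1) * sin (real k * arccos s))
      = sin (real (Suc (Suc k)) * arccos s)" if "s \<in> {-1..1}" for s
    using sin_mult_add_two[of "real k" "arccos s"] that by (simp add: algebra_simps)
  from has_cpv_integral_cong[OF recurrence t split] show ?thesis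
    by (simp only: mult_minus1 add_uminus_conv_diff add_diff_eq)
qed

(* Since sin (k arccos s) = sqrt (1 - s^2) U_(k-1)(s), this is the classical principal value
   of sqrt (1 - s^2) U_(k-1)(s) / (s - t). *)
lemma has_cpv_integral_sin_mult_arccos:
  assumes t: "\<bar>t\<bar> < 1"
  shows "has_cpv_integral (\<lambda>s. sin (real k * arccos s)) t (if k = 0 then 0 else - pi * chebT k t)"
proof (induction k rule: induct_nat_012)
  case 0
  show ?case
    by (simp add: has_cpv_integral_def)
next
  case 1
  have "has_cpv_integral (\<lambda>s. sin (arccos s)) t (- pi * t)"
    using has_cpv_integral_sqrt_one_minus_square[OF t]
    by (rule has_cpv_integral_cong[rotated 2]) (auto simp: sin_arccos t)
  then show ?case
    using t by (simp add: chebT_def)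
next
  case (ge2 k)
  have "((\<lambda>s. 2 * sin (real (Suc k) * arccos s)) has_integral (if k = 0 then pi else 0)) {-1..1}"
    using has_integral_mult_right[OF has_integral_sin_arccos, of 2]
      has_integral_mult_right[OF has_integral_sin_mult_arccos[of "Suc k"], of 2]
    by (cases k) auto
  moreover have "has_cpv_integral (\<lambda>s. sin (real (Suc k) * arccos s)) t (- pi * chebT (Suc k) t)"
    using ge2.IH(2) by simp
  moreover have "(if k = 0 then pi else 0) + 2 * t * (- pi * chebT (Suc k) t) - (if k = 0 then 0 else - pi * chebT k t)
      = - pi * chebT (Suc (Suc k)) t"
    unfolding chebT_Suc_Suc[of t k, OF less_imp_le[OF t]]
    using t by (cases "k = 0") (simp_all add: chebT_def algebra_simps)
  ultimately have "has_cpv_integral (\<lambda>s. sin (real (Suc (Suc k)) * arccos s)) t (- pi * chebT (Suc (Suc k)) t)"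
    using has_cpv_integral_sin_mult_arccos_recurrence[OF t ge2.IH(1)] integral_unique by metis
  then show ?case
    by simp
qed

lemma has_cpv_integral_sum_sin_mult_arccos:
  assumes "finite A" "\<bar>t\<bar> < 1" "\<And>j. j \<in> A \<Longrightarrow> k j \<ge> 1"
  shows "has_cpv_integral (\<lambda>s. \<Sum>j\<in>A. c j * sin (real (k j) * arccos s)) t
    (\<Sum>j\<in>A. c j * (- pi * chebT (k j) t))"
proof (rule has_cpv_integral_sum[OF assms(1,2)])
  show "continuous_on {-1..1} (\<lambda>s. c j * sin (real (k j) * arccos s))" for j
    using continuous_on_sin_mult_arccos by (rule continuous_on_mult_left)
  show "has_cpv_integral (\<lambda>s. c j * sin (real (k j) * arccos s)) t (c j * (- pi * chebT (k j) t))"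
    if "j \<in> A" for j
    using has_cpv_integral_cmult[OF has_cpv_integral_sin_mult_arccos[OF assms(2), of "k j"]] assms(3)[OF that]
    by simp
qed

section \<open>Expansion of the weight\<close>

lemma one_minus_cis_double: "1 - cis (2 * x) = cis x * (- 2 * \<i> * complex_of_real (sin x))"
proof -
  have double: "cos (x * 2) = 1 - 2 * sin x * sin x" "sin (x * 2) = 2 * sin x * cos x"
    using cos_double_sin[of x] sin_double[of x] by (simp_all add: power2_eq_square mult.commute)
  show ?thesis
    unfolding complex_eq_iff by (simp add: double algebra_simps)
qed

lemma alternating_binomial_sum_cis:
  fixes c x :: real
  shows "(\<Sum>j\<le>p. (-1)^j * of_nat (p choose j) * cis ((c + 2 * real j) * x))
       = cis ((c + real p) * x) * (- 2 * \<i> * complex_of_real (sin x))^p"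
proof -
  have "(\<Sum>j\<le>p. (-1)^j * of_nat (p choose j) * cis ((c + 2 * real j) * x))
      = cis (c * x) * (\<Sum>j\<le>p. of_nat (p choose j) * (- cis (2 * x))^j * 1^(p - j))"
    unfolding sum_distrib_left
  proof (rule sum.cong[OF refl])
    fix j
    have "cis (c * x) * cis (2 * x) ^ j = cis (c * x + real j * (2 * x))"
      by (subst Complex.DeMoivre, subst cis_mult, rule refl)
    also have "c * x + real j * (2 * x) = (c + 2 * real j) * x"
      by (simp add: algebra_simps)
    finally have cis_shift: "cis ((c + 2 * real j) * x) = cis (c * x) * cis (2 * x) ^ j"
      by simp
    show "(-1)^j * of_nat (p choose j) * cis ((c + 2 * real j) * x)
        = cis (c * x) * (of_nat (p choose j) * (- cis (2 * x))^j * 1^(p - j))"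
      unfolding cis_shift power_minus[of "cis (2 * x)"] power_one mult_1_right by (simp only: mult_ac)
  qed
  also have "\<dots> = cis (c * x) * (1 - cis (2 * x))^p"
    by (subst binomial_ring[symmetric]) simp
  also have "\<dots> = cis (c * x) * (cis x ^ p * (- 2 * \<i> * complex_of_real (sin x))^p)"
    unfolding one_minus_cis_double by (rule arg_cong[where f = "\<lambda>z. cis (c * x) * z"], rule power_mult_distrib)
  also have "\<dots> = (cis (c * x) * cis (real p * x)) * (- 2 * \<i> * complex_of_real (sin x))^p"
    unfolding Complex.DeMoivre by (rule mult.assoc[symmetric])
  also have "\<dots> = cis ((c + real p) * x) * (- 2 * \<i> * complex_of_real (sin x))^p"
    unfolding cis_mult by (simp add: distrib_right)
  finally show ?thesis .
qed

lemma minus_two_i_power_odd: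
  assumes "m \<ge> 1"
  shows "(- 2 * \<i>) ^ (2 * m - 1) = complex_of_real ((-1)^m * 2^(2*m-1)) * \<i>"
proof -
  obtain q where q: "m = Suc q"
    using assms by (cases m) auto
  have "2 * m - 1 = 2 * q + 1"
    using q by simp
  then have "(- 2 * \<i>) ^ (2 * m - 1) = ((- 2 * \<i>)^2)^q * (- 2 * \<i>)"
    by (simp add: power_mult power_add)
  also have "\<dots> = (-4)^q * (- 2 * \<i>)"
    by (simp add: power2_eq_square)
  also have "\<dots> = complex_of_real ((-1)^m * 2^(2*m-1)) * \<i>"
  proof -
    have "(-4::complex)^q = (-1)^q * 2^(2*q)"
      by (simp add: power_mult power_mult_distrib[symmetric])
    then show ?thesis
      unfolding q \<open>2 * m - 1 = 2 * q + 1\<close>[unfolded q] by (simp add: algebra_simps)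
  qed
  finally show ?thesis .
qed

lemma cos_mult_sin_power_odd:
  fixes x :: real and m n :: nat
  assumes "m \<ge> 1" "n \<ge> 2 * m"
  shows "cos (real n * x) * sin x ^ (2 * m - 1)
     = (1/2)^(2*m-1) * (-1)^m * (\<Sum>j=0..2*m-1. (-1)^j * real ((2*m-1) choose j) * sin (real (n - 2*m + 2*j + 1) * x))"
proof -
  define p where "p = 2 * m - 1"
  define c where "c = real (n - 2*m + 1)"
  have cp: "c + real p = real n"
    using assms by (simp add: c_def p_def of_nat_diff)
  have k: "real (n - 2*m + 2*j + 1) = c + 2 * real j" for j
    using assms by (simp add: c_def)
  have "(\<Sum>j\<le>p. (-1)^j * real (p choose j) * sin ((c + 2 * real j) * x))
      = Im (\<Sum>j\<le>p. (-1)^j * of_nat (p choose j) * cis ((c + 2 * real j) * x))"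
    by (simp add: Im_sum)
  also have "\<dots> = Im (cis (real n * x) * ((- 2 * \<i>)^p * complex_of_real (sin x) ^ p))"
    by (simp only: alternating_binomial_sum_cis cp power_mult_distrib)
  also have "\<dots> = (-1)^m * 2^p * sin x ^ p * cos (real n * x)"
    unfolding p_def minus_two_i_power_odd[OF assms(1)] by simp
  finally have expansion: "(1/2)^p * (-1)^m * (\<Sum>j\<le>p. (-1)^j * real (p choose j) * sin ((c + 2 * real j) * x))
      = ((1/2)^p * 2^p) * ((-1)^m * (-1)^m) * (sin x ^ p * cos (real n * x))"
    by (simp only: mult_ac)
  also have "\<dots> = cos (real n * x) * sin x ^ p"
    by (simp add: power_mult_distrib[symmetric] power_add[symmetric])
  finally show ?thesis
    unfolding k p_def[symmetric] atLeast0AtMost by (rule sym)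
qed

lemma one_minus_square_powr_eq_sin_arccos_power:
  fixes s :: real
  assumes "\<bar>s\<bar> \<le> 1" "m \<ge> 1"
  shows "(1 - s^2) powr (real m - 1/2) = sin (arccos s) ^ (2 * m - 1)"
proof (cases "s^2 = 1")
  case True
  then show ?thesis
    using assms by (simp add: sin_arccos_abs)
next
  case False
  then have pos: "1 - s^2 > 0"
    using assms by (simp add: abs_square_le_1 less_le)
  have "sin (arccos s) ^ (2 * m - 1) = sqrt (1 - s^2) ^ (2 * m - 1)"
    using assms by (simp add: sin_arccos_abs)
  also have "\<dots> = ((1 - s^2) powr (1/2)) powr real (2 * m - 1)"
    using pos by (simp only: powr_half_sqrt powr_realpow real_sqrt_gt_zero)
  also have "\<dots> = (1 - s^2) powr (real m - 1/2)"
    using assms by (simp add: powr_powr of_nat_diff algebra_simps)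
  finally show ?thesis
    by simp
qed

theorem mainTheorem3:
  fixes m n :: nat and r :: real
  assumes "m \<ge> 1" and "n \<ge> 2*m + 1" and "\<bar>r\<bar> < 1"
  shows "has_hadamard2_integral
           (\<lambda>s. chebT n s * (1 - s^2) powr (real m - 1/2)) r
           (pi * (-1)^(m+1) * (1/2)^(2*m-1) *
             (\<Sum>j=0..2*m-1. (-1)^j * real ((2*m-1) choose j)
                 * real (n + 1 - 2*m + 2*j) * chebU (n - 2*m + 2*j) r))"
proof -
  define k where "k j = n - 2*m + 2*j + 1" for j
  define c where "c j = (1/2)^(2*m-1) * (-1)^m * ((-1)^j * real ((2*m-1) choose j))" for j
  define P where "P t = (\<Sum>j=0..2*m-1. c j * (- pi * chebT (k j) t))" for t
  have expansion: "chebT n s * (1 - s^2) powr (real m - 1/2) = (\<Sum>j=0..2*m-1. c j * sin (real (k j) * arccos s))"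
    if "s \<in> {-1..1}" for s
    using cos_mult_sin_power_odd[OF assms(1), of n "arccos s"] one_minus_square_powr_eq_sin_arccos_power[of s m] that assms
    by (simp add: chebT_def c_def k_def sum_distrib_left abs_le_iff mult.assoc)
  have cpv: "has_cpv_integral (\<lambda>s. chebT n s * (1 - s^2) powr (real m - 1/2)) t (P t)"
    if "t \<in> {-1<..<1}" for t
    using has_cpv_integral_sum_sin_mult_arccos[of "{0..2*m-1}" t k c] that
    by (intro has_cpv_integral_cong[OF expansion[symmetric]]) (auto simp: P_def k_def)
  have derivative: "(P has_real_derivative (\<Sum>j=0..2*m-1. c j * (- pi * (real (k j) * chebU (k j - 1) r)))) (at r)"
    unfolding P_def by (intro DERIV_sum DERIV_cmult has_real_derivative_chebT assms(3)) (simp add: k_def)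
  have derivative_eq: "(\<Sum>j=0..2*m-1. c j * (- pi * (real (k j) * chebU (k j - 1) r)))
      = pi * (-1)^(m+1) * (1/2)^(2*m-1) *
        (\<Sum>j=0..2*m-1. (-1)^j * real ((2*m-1) choose j) * real (n + 1 - 2*m + 2*j) * chebU (n - 2*m + 2*j) r)"
    using assms(2) by (simp add: sum_distrib_left c_def k_def algebra_simps)
  show ?thesis
    unfolding has_hadamard2_integral_def using cpv derivative[unfolded derivative_eq] by blast
qed

end
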